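(* Let $(W;T,\rho)$ be an ENE-representation of an ENL algebra $(\mathfrak g,[\cdot,\cdot]_{\mathfrak g},E)$. Define $\rho^*:\mathfrak g\to\mathfrak{gl}(W^* )$ by $\langle\rho^*(x)\xi,u\rangle=-\langle\xi,\rho(x)u\rangle$ and $T^*:W^*\to W^*$ by $\langle T^*\xi,u\rangle=\langle\xi,Tu\rangle$. Then $(W^*;T^*,\rho^* )$ is an ENE-representation of $(\mathfrak g,[\cdot,\cdot]_{\mathfrak g},E)$.
   Context: Vector spaces are finite-dimensional over an algebraically closed field of characteristic zero. An ENL algebra $(\mathfrak g,[\cdot,\cdot],E)$ is a Lie algebra with linear $E$ satisfying $E[x,y]=[x,Ey]$ for all $x,y$. An ENE-representation $(W;T,\rho)$ of $(\mathfrak g,E)$ is a Lie algebra representation $\rho:\mathfrak g\to\mathfrak{gl}(W)$ with linear $T:W\to W$ such that $T(\rho(x)u)=\rho(Ex)u=\rho(x)(Tu)$ for all $x\in\mathfrak g,u\in W$. *)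

theory Defs
  imports Main "HOL.Vector_Spaces" "HOL-Library.Function_Algebras"
begin

text \<open>Standing assumption on the ground field: algebraically closed
 (characteristic zero is imposed by the type class field_char_0).\<close>
definition alg_closed_field :: "'k::field itself \<Rightarrow> bool" where
  "alg_closed_field _ \<longleftrightarrow>
     (\<forall>(n::nat) (a::nat \<Rightarrow> 'k). n \<ge> 1 \<longrightarrow> (\<exists>x. x ^ n + (\<Sum>i<n. a i * x ^ i) = 0))"

definition fd_subspace :: "('k::field \<Rightarrow> 'v::ab_group_add \<Rightarrow> 'v) \<Rightarrow> 'v set \<Rightarrow> bool" where
  "fd_subspace s V \<longleftrightarrow> vector_space s \<and> module.subspace s V \<and>
     (\<exists>B. finite B \<and> B \<subseteq> V \<and> module.span s B = V)"

definition lie_algebra :: "('k::field \<Rightarrow> 'g::ab_group_add \<Rightarrow> 'g) \<Rightarrow> ('g \<Rightarrow> 'g \<Rightarrow> 'g) \<Rightarrow> bool" where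
  "lie_algebra s br \<longleftrightarrow> fd_subspace s UNIV \<and>
     (\<forall>x. Vector_Spaces.linear s s (br x)) \<and>
     (\<forall>y. Vector_Spaces.linear s s (\<lambda>x. br x y)) \<and>
     (\<forall>x. br x x = 0) \<and>
     (\<forall>x y z. br x (br y z) + br y (br z x) + br z (br x y) = 0)"

definition ENL_algebra :: "('k::field \<Rightarrow> 'g::ab_group_add \<Rightarrow> 'g) \<Rightarrow> ('g \<Rightarrow> 'g \<Rightarrow> 'g) \<Rightarrow> ('g \<Rightarrow> 'g) \<Rightarrow> bool" where
  "ENL_algebra s br E \<longleftrightarrow> lie_algebra s br \<and> Vector_Spaces.linear s s E \<and>
     (\<forall>x y. E (br x y) = br x (E y))"

text \<open>ENE-representation (W;T,\<rho>) of (g,E), where W is given as a finite-dimensional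
 subspace V of an ambient vector space with scalar multiplication sw; the maps
 \<rho> x and T are only required to act on V (elements of gl(V)).\<close>
definition ENE_rep ::
  "('k::field \<Rightarrow> 'g::ab_group_add \<Rightarrow> 'g) \<Rightarrow> ('g \<Rightarrow> 'g \<Rightarrow> 'g) \<Rightarrow> ('g \<Rightarrow> 'g) \<Rightarrow>
   ('k \<Rightarrow> 'w::ab_group_add \<Rightarrow> 'w) \<Rightarrow> 'w set \<Rightarrow> ('w \<Rightarrow> 'w) \<Rightarrow> ('g \<Rightarrow> 'w \<Rightarrow> 'w) \<Rightarrow> bool" where
  "ENE_rep sg br E sw V T \<rho> \<longleftrightarrow> fd_subspace sw V \<and>
     \<comment> \<open>each \<rho> x is a linear endomorphism of V\<close>
     (\<forall>x. \<forall>u\<in>V. \<rho> x u \<in> V) \<and>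
     (\<forall>x. \<forall>u\<in>V. \<forall>v\<in>V. \<rho> x (u + v) = \<rho> x u + \<rho> x v) \<and>
     (\<forall>x c. \<forall>u\<in>V. \<rho> x (sw c u) = sw c (\<rho> x u)) \<and>
     \<comment> \<open>\<rho> is linear in x\<close>
     (\<forall>x y. \<forall>u\<in>V. \<rho> (x + y) u = \<rho> x u + \<rho> y u) \<and>
     (\<forall>x c. \<forall>u\<in>V. \<rho> (sg c x) u = sw c (\<rho> x u)) \<and>
     \<comment> \<open>\<rho> is a Lie algebra homomorphism into gl(V)\<close>
     (\<forall>x y. \<forall>u\<in>V. \<rho> (br x y) u = \<rho> x (\<rho> y u) - \<rho> y (\<rho> x u)) \<and>
     \<comment> \<open>T is a linear endomorphism of V\<close>
     (\<forall>u\<in>V. T u \<in> V) \<and>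
     (\<forall>u\<in>V. \<forall>v\<in>V. T (u + v) = T u + T v) \<and>
     (\<forall>c. \<forall>u\<in>V. T (sw c u) = sw c (T u)) \<and>
     \<comment> \<open>compatibility T(\<rho>(x)u) = \<rho>(Ex)u = \<rho>(x)(Tu)\<close>
     (\<forall>x. \<forall>u\<in>V. T (\<rho> x u) = \<rho> (E x) u \<and> \<rho> (E x) u = \<rho> x (T u))"

text \<open>Dual space W* of the whole space 'w: linear functionals, inside the
 function space 'w \<Rightarrow> 'k with pointwise operations.\<close>
definition dual_space :: "('k::field \<Rightarrow> 'w::ab_group_add \<Rightarrow> 'w) \<Rightarrow> ('w \<Rightarrow> 'k) set" where
  "dual_space sw = {\<xi>. Vector_Spaces.linear sw (*) \<xi>}"

definition dual_scale :: "'k::field \<Rightarrow> ('w \<Rightarrow> 'k) \<Rightarrow> ('w \<Rightarrow> 'k)" where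
  "dual_scale c \<xi> = (\<lambda>u. c * \<xi> u)"

definition dual_rep :: "('g \<Rightarrow> 'w \<Rightarrow> 'w) \<Rightarrow> 'g \<Rightarrow> ('w \<Rightarrow> 'k::field) \<Rightarrow> ('w \<Rightarrow> 'k)" where
  "dual_rep \<rho> x \<xi> = (\<lambda>u. - \<xi> (\<rho> x u))"

definition dual_map :: "('w \<Rightarrow> 'w) \<Rightarrow> ('w \<Rightarrow> 'k::field) \<Rightarrow> ('w \<Rightarrow> 'k)" where
  "dual_map T \<xi> = (\<lambda>u. \<xi> (T u))"

end

theory Submission
  imports Defs
begin

text \<open>Every axiom of an ENE-representation dualises pointwise, by evaluating both sides at a
  vector u; the Lie homomorphism property survives because the sign in \<rho>* reverses the order of
  composition, and the two compatibility conditions for T and \<rho> trade places. The one point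
  that is not formal is that W* is again finite-dimensional: it is spanned by the coordinate
  functionals of a finite basis of W.\<close>

lemma sum_fun_apply: "sum f A x = (\<Sum>a\<in>A. f a x)"
  by (induction A rule: infinite_finite_induct) (simp_all add: plus_fun_def)

lemma vector_space_mult: "vector_space ((*) :: 'k::field \<Rightarrow> 'k \<Rightarrow> 'k)"
  by unfold_locales (auto simp: algebra_simps)

lemma vector_space_dual_scale: "vector_space (dual_scale :: 'k::field \<Rightarrow> ('w \<Rightarrow> 'k) \<Rightarrow> 'w \<Rightarrow> 'k)"
  by unfold_locales (auto simp: dual_scale_def algebra_simps)

lemma mem_dual_space_iff:
  assumes "vector_space sw"
  shows "\<xi> \<in> dual_space sw \<longleftrightarrow>
    (\<forall>u v. \<xi> (u + v) = \<xi> u + \<xi> v) \<and> (\<forall>c u. \<xi> (sw c u) = c * \<xi> u)"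
  using assms vector_space_mult by (auto simp: dual_space_def linear_iff)

lemma subspace_dual_space:
  fixes sw :: "'k::field \<Rightarrow> 'w::ab_group_add \<Rightarrow> 'w"
  assumes "vector_space sw"
  shows "module.subspace dual_scale (dual_space sw)"
proof -
  interpret D: vector_space "dual_scale :: 'k \<Rightarrow> ('w \<Rightarrow> 'k) \<Rightarrow> _"
    by (rule vector_space_dual_scale)
  show ?thesis
    by (auto simp: D.subspace_def mem_dual_space_iff[OF assms] dual_scale_def algebra_simps)
qed

lemma dual_map_mem_dual_space:
  assumes "Vector_Spaces.linear sw sw T" and "\<xi> \<in> dual_space sw"
  shows "dual_map T \<xi> \<in> dual_space sw"
proof -
  have "dual_map T \<xi> = \<xi> \<circ> T"
    by (simp add: dual_map_def comp_def)
  then show ?thesis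
    using assms Vector_Spaces.linear_compose unfolding dual_space_def by fastforce
qed

lemma dual_rep_eq_dual_map: "dual_rep \<rho> x \<xi> = dual_map (\<rho> x) (dual_scale (- 1) \<xi>)"
  by (simp add: dual_rep_def dual_map_def dual_scale_def)

lemma dual_rep_mem_dual_space:
  fixes sw :: "'k::field \<Rightarrow> 'w::ab_group_add \<Rightarrow> 'w"
  assumes "vector_space sw" and "Vector_Spaces.linear sw sw (\<rho> x)" and "\<xi> \<in> dual_space sw"
  shows "dual_rep \<rho> x \<xi> \<in> dual_space sw"
proof -
  interpret D: vector_space "dual_scale :: 'k \<Rightarrow> ('w \<Rightarrow> 'k) \<Rightarrow> _"
    by (rule vector_space_dual_scale)
  have "dual_scale (- 1) \<xi> \<in> dual_space sw"
    using subspace_dual_space[OF assms(1)] assms(3) by (rule D.subspace_scale)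
  then show ?thesis
    unfolding dual_rep_eq_dual_map by (rule dual_map_mem_dual_space[OF assms(2)])
qed

lemma dual_rep_bracket:
  assumes "\<And>x y u. \<rho> (br x y) u = \<rho> x (\<rho> y u) - \<rho> y (\<rho> x u)"
    and "\<xi> \<in> dual_space sw"
  shows "dual_rep \<rho> (br x y) \<xi> = dual_rep \<rho> x (dual_rep \<rho> y \<xi>) - dual_rep \<rho> y (dual_rep \<rho> x \<xi>)"
proof -
  interpret \<xi>: module_hom sw "(*)" \<xi>
    using assms(2) by (simp add: dual_space_def linear_iff_module_hom)
  show ?thesis
    by (simp add: dual_rep_def fun_eq_iff assms(1) \<xi>.diff)
qed

lemma (in vector_space) linear_functional_eq_sum_coordinates:
  assumes "independent B" and "span B = UNIV" and "finite B"
    and "Vector_Spaces.linear scale (*) \<xi>"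
  shows "\<xi> = (\<Sum>b\<in>B. dual_scale (\<xi> b) (\<lambda>v. representation B v b))"
proof
  fix v
  interpret \<xi>: module_hom scale "(*)" \<xi>
    using assms(4) by (simp add: linear_iff_module_hom)
  have "\<xi> v = \<xi> (\<Sum>b\<in>B. scale (representation B v b) b)"
    using sum_representation_eq[of B v B] assms(1-3) by simp
  also have "\<dots> = (\<Sum>b\<in>B. representation B v b * \<xi> b)"
    by (simp add: \<xi>.sum \<xi>.scale)
  also have "\<dots> = (\<Sum>b\<in>B. dual_scale (\<xi> b) (\<lambda>v. representation B v b)) v"
    by (simp add: sum_fun_apply dual_scale_def mult.commute)
  finally show "\<xi> v = (\<Sum>b\<in>B. dual_scale (\<xi> b) (\<lambda>v. representation B v b)) v" .
qed

lemma (in vector_space) dual_space_eq_span_coordinates: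
  assumes "independent B" and "span B = UNIV" and "finite B"
  shows "dual_space scale = module.span dual_scale ((\<lambda>b v. representation B v b) ` B)"
proof -
  interpret D: vector_space "dual_scale :: 'a \<Rightarrow> ('b \<Rightarrow> 'a) \<Rightarrow> _"
    by (rule vector_space_dual_scale)
  have coords: "(\<lambda>b v. representation B v b) ` B \<subseteq> dual_space scale"
    using linear_representation[OF assms(1,2)] by (auto simp: dual_space_def)
  show ?thesis
  proof
    show "D.span ((\<lambda>b v. representation B v b) ` B) \<subseteq> dual_space scale"
      using coords subspace_dual_space[OF vector_space_axioms] by (rule D.span_minimal)
    show "dual_space scale \<subseteq> D.span ((\<lambda>b v. representation B v b) ` B)"
    proof
      fix \<xi> :: "'b \<Rightarrow> 'a"
      assume "\<xi> \<in> dual_space scale"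
      then have "\<xi> = (\<Sum>b\<in>B. dual_scale (\<xi> b) (\<lambda>v. representation B v b))"
        using assms by (intro linear_functional_eq_sum_coordinates) (auto simp: dual_space_def)
      also have "\<dots> \<in> D.span ((\<lambda>b v. representation B v b) ` B)"
        by (intro D.span_sum D.span_scale D.span_base) auto
      finally show "\<xi> \<in> D.span ((\<lambda>b v. representation B v b) ` B)" .
    qed
  qed
qed

lemma fd_subspace_dual_space:
  fixes sw :: "'k::field \<Rightarrow> 'w::ab_group_add \<Rightarrow> 'w"
  assumes "fd_subspace sw UNIV"
  shows "fd_subspace dual_scale (dual_space sw)"
proof -
  interpret W: vector_space sw
    using assms by (simp add: fd_subspace_def)
  obtain S where "finite S" and "W.span S = UNIV"
    using assms unfolding fd_subspace_def by blast
  obtain B where "W.independent B" and "UNIV \<subseteq> W.span B"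
    using W.basis_exists[of UNIV] by blast
  then have B: "W.independent B" "W.span B = UNIV"
    by auto
  have "finite B"
    using W.independent_span_bound[OF \<open>finite S\<close> B(1)] \<open>W.span S = UNIV\<close> by simp
  define coords where "coords = (\<lambda>b v. W.representation B v b) ` B"
  have "coords \<subseteq> dual_space sw"
    using W.linear_representation[OF B] by (auto simp: coords_def dual_space_def)
  moreover have "module.span dual_scale coords = dual_space sw"
    using W.dual_space_eq_span_coordinates[OF B \<open>finite B\<close>] by (simp add: coords_def)
  moreover have "finite coords"
    using \<open>finite B\<close> by (simp add: coords_def)
  ultimately show ?thesis
    using vector_space_dual_scale subspace_dual_space[OF W.vector_space_axioms]
    unfolding fd_subspace_def by blast
qed

lemma ENE_rep_dual:
  fixes sw :: "'k::field \<Rightarrow> 'w::ab_group_add \<Rightarrow> 'w"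
  assumes "ENE_rep sg br E sw UNIV T \<rho>"
  shows "ENE_rep sg br E dual_scale (dual_space sw) (dual_map T) (dual_rep \<rho>)"
proof -
  note rep = assms[unfolded ENE_rep_def]
  have W: "fd_subspace sw UNIV" and vs: "vector_space sw"
    using rep by (auto simp: fd_subspace_def)
  have lin: "Vector_Spaces.linear sw sw T" "\<And>x. Vector_Spaces.linear sw sw (\<rho> x)"
    using rep vs by (auto simp: linear_iff)
  have \<rho>_add: "\<rho> (x + y) u = \<rho> x u + \<rho> y u"
    and \<rho>_scale: "\<rho> (sg c x) u = sw c (\<rho> x u)"
    and \<rho>_bracket: "\<rho> (br x y) u = \<rho> x (\<rho> y u) - \<rho> y (\<rho> x u)"
    and compat: "T (\<rho> x u) = \<rho> (E x) u" "\<rho> (E x) u = \<rho> x (T u)" for x y c u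
    using rep by auto
  have \<xi>_add: "\<xi> (u + v) = \<xi> u + \<xi> v"
    and \<xi>_scale: "\<xi> (sw c u) = c * \<xi> u" if "\<xi> \<in> dual_space sw" for \<xi> u v c
    using that mem_dual_space_iff[OF vs] by blast+
  show ?thesis
    unfolding ENE_rep_def
  proof (intro conjI allI ballI fd_subspace_dual_space[OF W])
    fix x and \<xi> :: "'w \<Rightarrow> 'k"
    assume "\<xi> \<in> dual_space sw"
    then show "dual_rep \<rho> x \<xi> \<in> dual_space sw" and "dual_map T \<xi> \<in> dual_space sw"
      by (rule dual_rep_mem_dual_space[OF vs lin(2)], rule dual_map_mem_dual_space[OF lin(1)])
  next
    fix x y and \<xi> :: "'w \<Rightarrow> 'k"
    assume "\<xi> \<in> dual_space sw"
    then show "dual_rep \<rho> (br x y) \<xi> =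
        dual_rep \<rho> x (dual_rep \<rho> y \<xi>) - dual_rep \<rho> y (dual_rep \<rho> x \<xi>)"
      by (rule dual_rep_bracket[where \<rho> = \<rho> and br = br, OF \<rho>_bracket])
  next
    fix x y c and \<xi> :: "'w \<Rightarrow> 'k"
    assume "\<xi> \<in> dual_space sw"
    then show "dual_rep \<rho> (x + y) \<xi> = dual_rep \<rho> x \<xi> + dual_rep \<rho> y \<xi>"
      and "dual_rep \<rho> (sg c x) \<xi> = dual_scale c (dual_rep \<rho> x \<xi>)"
      by (simp_all add: dual_rep_def dual_scale_def fun_eq_iff \<rho>_add \<rho>_scale \<xi>_add \<xi>_scale)
  next
    fix x c and \<xi> \<eta> :: "'w \<Rightarrow> 'k"
    show "dual_rep \<rho> x (\<xi> + \<eta>) = dual_rep \<rho> x \<xi> + dual_rep \<rho> x \<eta>"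
      and "dual_rep \<rho> x (dual_scale c \<xi>) = dual_scale c (dual_rep \<rho> x \<xi>)"
      and "dual_map T (\<xi> + \<eta>) = dual_map T \<xi> + dual_map T \<eta>"
      and "dual_map T (dual_scale c \<xi>) = dual_scale c (dual_map T \<xi>)"
      by (simp_all add: dual_rep_def dual_map_def dual_scale_def fun_eq_iff)
  next
    fix x and \<xi> :: "'w \<Rightarrow> 'k"
    show "dual_map T (dual_rep \<rho> x \<xi>) = dual_rep \<rho> (E x) \<xi>"
      and "dual_rep \<rho> (E x) \<xi> = dual_rep \<rho> x (dual_map T \<xi>)"
      by (simp_all add: dual_rep_def dual_map_def fun_eq_iff compat)
  qed
qed

theorem proposition1p14:
  fixes sg :: "'k::field_char_0 \<Rightarrow> 'g::ab_group_add \<Rightarrow> 'g"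
    and br :: "'g \<Rightarrow> 'g \<Rightarrow> 'g"
    and E :: "'g \<Rightarrow> 'g"
    and sw :: "'k \<Rightarrow> 'w::ab_group_add \<Rightarrow> 'w"
    and T :: "'w \<Rightarrow> 'w"
    and \<rho> :: "'g \<Rightarrow> 'w \<Rightarrow> 'w"
  assumes "alg_closed_field TYPE('k)"
    and "ENL_algebra sg br E"
    and "ENE_rep sg br E sw UNIV T \<rho>"
  shows "ENE_rep sg br E dual_scale (dual_space sw) (dual_map T) (dual_rep \<rho>)"
  using assms(3) by (rule ENE_rep_dual)

end
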